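(* Let $T$ be a tree. If $\Gamma(T)-\gamma(T)<3$, then the domination polynomial $D(T,x)$ is unimodal.
   Context: A dominating set of a graph $G=(V,E)$ is a set $S\subseteq V$ such that every vertex is in $S$ or adjacent to a vertex of $S$; it is minimal if no proper subset is dominating. $\gamma(T)$ is the minimum size of a dominating set and $\Gamma(T)$ the maximum size of a minimal dominating set. For $T$ of order $n$, $D(T,x)=\sum_{i=0}^n d_ix^i$ where $d_i$ is the number of dominating sets of size $i$. A polynomial $a_0+\cdots+a_nx^n$ is unimodal if there is $0\le k\le n$ with $a_0\le\cdots\le a_k\ge a_{k+1}\ge\cdots\ge a_n$. *)

theory Defs
  imports Main
begin

definition simple_graph :: "'a set \<Rightarrow> 'a set set \<Rightarrow> bool" where
  "simple_graph V E \<longleftrightarrow> finite V \<and> (\<forall>e\<in>E. e \<subseteq> V \<and> card e = 2)"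

definition adj :: "'a set set \<Rightarrow> 'a \<Rightarrow> 'a \<Rightarrow> bool" where
  "adj E u v \<longleftrightarrow> {u, v} \<in> E"

definition walk :: "'a set \<Rightarrow> 'a set set \<Rightarrow> 'a list \<Rightarrow> bool" where
  "walk V E p \<longleftrightarrow> p \<noteq> [] \<and> set p \<subseteq> V \<and> (\<forall>i. Suc i < length p \<longrightarrow> adj E (p ! i) (p ! Suc i))"

definition connected_graph :: "'a set \<Rightarrow> 'a set set \<Rightarrow> bool" where
  "connected_graph V E \<longleftrightarrow> V \<noteq> {} \<and>
     (\<forall>u\<in>V. \<forall>v\<in>V. \<exists>p. walk V E p \<and> hd p = u \<and> last p = v)"

definition has_cycle :: "'a set \<Rightarrow> 'a set set \<Rightarrow> bool" where
  "has_cycle V E \<longleftrightarrow> (\<exists>p. walk V E p \<and> length p \<ge> 3 \<and> distinct p \<and> adj E (last p) (hd p))"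

definition is_tree :: "'a set \<Rightarrow> 'a set set \<Rightarrow> bool" where
  "is_tree V E \<longleftrightarrow> simple_graph V E \<and> connected_graph V E \<and> \<not> has_cycle V E"

definition dominating :: "'a set \<Rightarrow> 'a set set \<Rightarrow> 'a set \<Rightarrow> bool" where
  "dominating V E S \<longleftrightarrow> S \<subseteq> V \<and> (\<forall>v\<in>V. v \<in> S \<or> (\<exists>u\<in>S. adj E u v))"

definition minimal_dominating :: "'a set \<Rightarrow> 'a set set \<Rightarrow> 'a set \<Rightarrow> bool" where
  "minimal_dominating V E S \<longleftrightarrow> dominating V E S \<and> (\<forall>S'. S' \<subset> S \<longrightarrow> \<not> dominating V E S')"

definition domination_number :: "'a set \<Rightarrow> 'a set set \<Rightarrow> nat" where
  "domination_number V E = Min (card ` {S. dominating V E S})"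

definition upper_domination_number :: "'a set \<Rightarrow> 'a set set \<Rightarrow> nat" where
  "upper_domination_number V E = Max (card ` {S. minimal_dominating V E S})"

text \<open>d_i = number of dominating sets of size i (coefficients of D(T,x)).\<close>
definition dom_coeff :: "'a set \<Rightarrow> 'a set set \<Rightarrow> nat \<Rightarrow> nat" where
  "dom_coeff V E i = card {S. dominating V E S \<and> card S = i}"

definition unimodal :: "(nat \<Rightarrow> nat) \<Rightarrow> nat \<Rightarrow> bool" where
  "unimodal a n \<longleftrightarrow> (\<exists>k\<le>n. (\<forall>i. i < k \<longrightarrow> a i \<le> a (Suc i)) \<and>
                             (\<forall>i. k \<le> i \<and> i < n \<longrightarrow> a i \<ge> a (Suc i)))"

end

(*
  For a dominating set S call v \<in> S removable if S - {v} is still dominating, and let r(S) be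
  the number of removable vertices. Counting pairs (S, v) with v removable from S, where
  |S| = i + 1, gives (n - i) d_i = \<Sum> r(S). In a tree, r(S) \<le> 2 (|S| - \<gamma>): deleting a deepest
  removable vertex v costs at most two removable vertices: if w stops being removable, some
  vertex is dominated only by v and w, and as v is deepest this forces w to be the parent of v
  or the only other neighbour in S of the parent of v.
  Conversely r(S) \<ge> 2 (|S| - \<Gamma>): for each colour class of the bipartition, the vertices of S
  of that colour together with private neighbours of the non-removable vertices of the other
  colour form an independent set, hence a subset of a minimal dominating set.
  So d_i \<le> d_(i+1) whenever 3 i + 2 \<le> n + 2 \<gamma>, and d_(i+1) \<le> d_i whenever 3 i + 2 \<ge> n + 2 \<Gamma>.
  If \<Gamma> \<le> \<gamma> + 2 these two ranges leave at most one step undecided, which unimodality allows.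
*)
theory Submission
  imports Defs
begin

lemma adj_commute: "adj E u v = adj E v u"
  by (simp add: adj_def insert_commute)

lemma walk_iff_successively: "walk V E p \<longleftrightarrow> p \<noteq> [] \<and> set p \<subseteq> V \<and> successively (adj E) p"
  by (simp add: walk_def successively_conv_nth)

definition removable :: "'a set \<Rightarrow> 'a set set \<Rightarrow> 'a set \<Rightarrow> 'a set" where
  "removable V E S = {v \<in> S. dominating V E (S - {v})}"

definition independent :: "'a set set \<Rightarrow> 'a set \<Rightarrow> bool" where
  "independent E I \<longleftrightarrow> (\<forall>x\<in>I. \<forall>y\<in>I. \<not> adj E x y)"

lemma dominating_subset: "dominating V E S \<Longrightarrow> S \<subseteq> V"
  by (simp add: dominating_def)

lemma finite_dominating_sets: "finite V \<Longrightarrow> finite {S. dominating V E S \<and> P S}"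
  by (rule finite_subset[of _ "Pow V"]) (auto dest: dominating_subset)

lemma domination_number_le:
  assumes "finite V" "dominating V E S"
  shows "domination_number V E \<le> card S"
  unfolding domination_number_def
  using assms finite_dominating_sets[of V E "\<lambda>_. True"] by (intro Min_le) auto

lemma card_le_upper_domination_number:
  assumes "finite V" "minimal_dominating V E S"
  shows "card S \<le> upper_domination_number V E"
  unfolding upper_domination_number_def minimal_dominating_def
  using assms finite_dominating_sets[of V E "\<lambda>S. \<forall>S'. S' \<subset> S \<longrightarrow> \<not> dominating V E S'"]
  by (intro Max_ge) (auto simp: minimal_dominating_def)

lemma minimal_dominating_if_independent:
  assumes "dominating V E J" "independent E J"
  shows "minimal_dominating V E J"
  unfolding minimal_dominating_def
proof (intro conjI assms allI impI notI)
  fix S assume "S \<subset> J" "dominating V E S"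
  then obtain j where "j \<in> J" "j \<notin> S" by blast
  then have "j \<in> V" using dominating_subset[OF assms(1)] by blast
  then obtain u where "u \<in> S" "adj E u j"
    using \<open>dominating V E S\<close> \<open>j \<notin> S\<close> unfolding dominating_def by blast
  then show False
    using \<open>S \<subset> J\<close> \<open>j \<in> J\<close> assms(2) unfolding independent_def by blast
qed

lemma card_independent_le_upper_domination_number:
  assumes "finite V" and loopfree: "\<And>v. \<not> adj E v v" and "I \<subseteq> V" "independent E I"
  shows "card I \<le> upper_domination_number V E"
proof -
  define F where "F = {J. J \<subseteq> V \<and> independent E J}"
  have "F \<subseteq> Pow V" unfolding F_def by blast
  then have "finite F" by (rule finite_subset) (simp add: \<open>finite V\<close>)
  moreover have "I \<in> F" unfolding F_def using assms by auto
  ultimately obtain J where "J \<in> F" "I \<subseteq> J" and J_maximal: "\<forall>K\<in>F. J \<subseteq> K \<longrightarrow> J = K"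
    by (metis finite_has_maximal2)
  then have "J \<subseteq> V" "independent E J" unfolding F_def by auto
  have "dominating V E J"
    unfolding dominating_def
  proof (intro conjI \<open>J \<subseteq> V\<close> ballI)
    fix v assume "v \<in> V"
    show "v \<in> J \<or> (\<exists>u\<in>J. adj E u v)"
    proof (rule ccontr)
      assume "\<not> (v \<in> J \<or> (\<exists>u\<in>J. adj E u v))"
      then have "v \<notin> J" and undominated: "\<forall>u\<in>J. \<not> adj E u v" by auto
      moreover have "\<forall>u\<in>J. \<not> adj E v u"
        using undominated by (simp add: adj_commute[of E v])
      ultimately have "insert v J \<in> F"
        using \<open>J \<subseteq> V\<close> \<open>independent E J\<close> \<open>v \<in> V\<close> loopfree
        unfolding F_def independent_def by auto
      then have "J = insert v J" using J_maximal by blast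
      then show False using \<open>v \<notin> J\<close> by blast
    qed
  qed
  then have "card J \<le> upper_domination_number V E"
    using \<open>independent E J\<close>
    by (intro card_le_upper_domination_number[OF \<open>finite V\<close>] minimal_dominating_if_independent)
  then show ?thesis
    using card_mono[OF finite_subset[OF \<open>J \<subseteq> V\<close> \<open>finite V\<close>] \<open>I \<subseteq> J\<close>] by simp
qed

definition private_neighbour :: "'a set \<Rightarrow> 'a set set \<Rightarrow> 'a set \<Rightarrow> 'a \<Rightarrow> 'a \<Rightarrow> bool" where
  "private_neighbour V E S a u \<longleftrightarrow> u \<in> V \<and> (\<forall>z\<in>S. z = u \<or> adj E z u \<longrightarrow> z = a)"

lemma private_neighbour_exists:
  assumes "dominating V E S" "a \<in> S - removable V E S"
  shows "\<exists>u. private_neighbour V E S a u"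
proof -
  have "\<not> dominating V E (S - {a})" "S - {a} \<subseteq> V"
    using assms dominating_subset unfolding removable_def by auto
  then obtain u where "u \<in> V" "u \<notin> S - {a}" "\<forall>z\<in>S - {a}. \<not> adj E z u"
    unfolding dominating_def by blast
  then show ?thesis unfolding private_neighbour_def by blast
qed

lemma private_neighbour_cases:
  assumes "dominating V E S" "private_neighbour V E S a u"
  shows "u = a \<or> (u \<notin> S \<and> adj E a u)"
proof -
  have "u \<in> V" and only_a: "\<And>z. z \<in> S \<Longrightarrow> z = u \<or> adj E z u \<Longrightarrow> z = a"
    using assms(2) unfolding private_neighbour_def by auto
  then obtain z where "z \<in> S" "z = u \<or> adj E z u"
    using assms(1) unfolding dominating_def by blast
  then show ?thesis using only_a by blast
qed

lemma independent_private_neighbour_swap: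
  fixes c :: "'a \<Rightarrow> bool"
  assumes colouring: "\<And>u v. adj E u v \<Longrightarrow> c u \<noteq> c v" and "dominating V E S"
    and "P \<subseteq> S" and pn: "\<And>a. a \<in> P \<Longrightarrow> private_neighbour V E S a (pn a)"
  shows "independent E ({x \<in> S. c x = b} \<union> pn ` {a \<in> P. c a \<noteq> b})"
    (is "independent E ?I")
proof -
  have no_edge: False if "x \<in> ?I" "y \<in> ?I" "adj E x y" "c x \<noteq> b" for x y
  proof -
    have "x \<noteq> y" using colouring[OF \<open>adj E x y\<close>] by auto
    obtain a where a: "a \<in> P" "c a \<noteq> b" "x = pn a"
      using \<open>x \<in> ?I\<close> \<open>c x \<noteq> b\<close> by blast
    have "c x = c a" using \<open>c x \<noteq> b\<close> a(2) by auto
    \<comment> \<open>a private neighbour outside S has the colour opposite to its owner\<close>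
    then have "x = a"
      using private_neighbour_cases[OF \<open>dominating V E S\<close> pn[OF a(1)]] a(3) colouring by auto
    have "y \<notin> S"
    proof
      assume "y \<in> S"
      moreover have "adj E y (pn a)" using \<open>adj E x y\<close> a(3) adj_commute by metis
      ultimately have "y = a" using pn[OF a(1)] unfolding private_neighbour_def by blast
      then show False using \<open>x = a\<close> \<open>x \<noteq> y\<close> by simp
    qed
    then obtain a' where "a' \<in> P" "y = pn a'"
      using \<open>y \<in> ?I\<close> by blast
    then have "a \<in> S" "a \<noteq> a'"
      using \<open>a \<in> P\<close> \<open>P \<subseteq> S\<close> a(3) \<open>x \<noteq> y\<close> by auto
    then show False
      using pn[OF \<open>a' \<in> P\<close>] \<open>adj E x y\<close> \<open>x = a\<close> \<open>y = pn a'\<close>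
      unfolding private_neighbour_def by blast
  qed
  show ?thesis
    unfolding independent_def
  proof (intro ballI notI)
    fix x y assume "x \<in> ?I" "y \<in> ?I" "adj E x y"
    then have "adj E y x" by (simp add: adj_commute)
    have "c x \<noteq> b \<or> c y \<noteq> b" using colouring[OF \<open>adj E x y\<close>] by auto
    then show False
      using no_edge \<open>x \<in> ?I\<close> \<open>y \<in> ?I\<close> \<open>adj E x y\<close> \<open>adj E y x\<close> by blast
  qed
qed

lemma inj_on_private_neighbour:
  assumes "dominating V E S" "P \<subseteq> S"
    and pn: "\<And>a. a \<in> P \<Longrightarrow> private_neighbour V E S a (pn a)"
  shows "inj_on pn P"
proof (rule inj_onI, rule ccontr)
  fix a a' assume "a \<in> P" "a' \<in> P" "pn a = pn a'" "a \<noteq> a'"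
  then have "a' = pn a \<or> adj E a' (pn a)"
    using private_neighbour_cases[OF \<open>dominating V E S\<close> pn[OF \<open>a' \<in> P\<close>]] by auto
  moreover have "a' \<in> S" using \<open>a' \<in> P\<close> \<open>P \<subseteq> S\<close> by blast
  ultimately show False
    using pn[OF \<open>a \<in> P\<close>] \<open>a \<noteq> a'\<close> unfolding private_neighbour_def by auto
qed

lemma card_private_neighbour_swap:
  assumes "finite V" "dominating V E S" "P \<subseteq> S"
    and pn: "\<And>a. a \<in> P \<Longrightarrow> private_neighbour V E S a (pn a)"
  shows "card ({x \<in> S. c x = b} \<union> pn ` {a \<in> P. c a \<noteq> b}) =
    card {x \<in> S. c x = b} + card {a \<in> P. c a \<noteq> b}"
proof -
  have "finite S" using finite_subset[OF dominating_subset[OF assms(2)] assms(1)] .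
  have "pn a \<in> S \<longleftrightarrow> pn a = a" if "a \<in> P" for a
    using pn[OF that] \<open>P \<subseteq> S\<close> that unfolding private_neighbour_def by auto
  then have "{x \<in> S. c x = b} \<inter> pn ` {a \<in> P. c a \<noteq> b} = {}"
    by auto
  then have "card ({x \<in> S. c x = b} \<union> pn ` {a \<in> P. c a \<noteq> b}) =
      card {x \<in> S. c x = b} + card (pn ` {a \<in> P. c a \<noteq> b})"
    using \<open>finite S\<close> finite_subset[OF \<open>P \<subseteq> S\<close>] by (intro card_Un_disjoint) auto
  also have "card (pn ` {a \<in> P. c a \<noteq> b}) = card {a \<in> P. c a \<noteq> b}"
    using inj_on_subset[OF inj_on_private_neighbour[OF assms(2,3) pn]] by (intro card_image) auto
  finally show ?thesis .
qed

lemma twice_card_le_card_removable_plus_upper_domination_number: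
  fixes c :: "'a \<Rightarrow> bool"
  assumes "finite V" and colouring: "\<And>u v. adj E u v \<Longrightarrow> c u \<noteq> c v" and "dominating V E S"
  shows "2 * card S \<le> card (removable V E S) + 2 * upper_domination_number V E"
proof -
  define P where "P = S - removable V E S"
  define pn where "pn a = (SOME u. private_neighbour V E S a u)" for a
  have pn: "private_neighbour V E S a (pn a)" if "a \<in> P" for a
  proof -
    have "\<exists>u. private_neighbour V E S a u"
      using private_neighbour_exists[OF \<open>dominating V E S\<close>] that unfolding P_def by simp
    then show ?thesis unfolding pn_def by (rule someI_ex)
  qed
  have "S \<subseteq> V" using \<open>dominating V E S\<close> by (rule dominating_subset)
  then have "finite S" using \<open>finite V\<close> by (rule finite_subset)
  have "P \<subseteq> S" unfolding P_def by blast
  define I where "I b = {x \<in> S. c x = b} \<union> pn ` {a \<in> P. c a \<noteq> b}" for b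
  have bound: "card (I b) \<le> upper_domination_number V E" for b
  proof (rule card_independent_le_upper_domination_number[OF \<open>finite V\<close>])
    show "\<not> adj E v v" for v using colouring by blast
    show "I b \<subseteq> V"
      unfolding I_def using \<open>S \<subseteq> V\<close> pn unfolding private_neighbour_def by auto
    show "independent E (I b)"
      unfolding I_def using colouring \<open>dominating V E S\<close> \<open>P \<subseteq> S\<close> pn
      by (rule independent_private_neighbour_swap)
  qed
  have split: "card {x \<in> X. c x = True} + card {x \<in> X. c x = False} = card X"
    if "finite X" for X
    using card_Int_Diff[OF that, of "{x. c x}"] by (simp add: Int_def set_diff_eq)
  have "card (I True) + card (I False) = card S + card P"
    using card_private_neighbour_swap[OF \<open>finite V\<close> \<open>dominating V E S\<close> \<open>P \<subseteq> S\<close> pn,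
        where c = c and b = True]
      card_private_neighbour_swap[OF \<open>finite V\<close> \<open>dominating V E S\<close> \<open>P \<subseteq> S\<close> pn,
        where c = c and b = False]
      split[OF \<open>finite S\<close>] split[OF finite_subset[OF \<open>P \<subseteq> S\<close> \<open>finite S\<close>]]
    unfolding I_def by simp
  moreover have "removable V E S \<subseteq> S" unfolding removable_def by blast
  then have "card P = card S - card (removable V E S)" "card (removable V E S) \<le> card S"
    unfolding P_def using \<open>finite S\<close> by (auto intro: card_Diff_subset finite_subset card_mono)
  ultimately show ?thesis using bound[of True] bound[of False] by linarith
qed

lemma dom_coeff_double_count:
  assumes "finite V"
  shows "(card V - i) * dom_coeff V E i =
    (\<Sum>S\<in>{S. dominating V E S \<and> card S = Suc i}. card (removable V E S))"
proof -
  define D where "D k = {S. dominating V E S \<and> card S = k}" for k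
  have finite_D: "finite (D k)" for k
    unfolding D_def using assms by (rule finite_dominating_sets)
  have finite_dom: "finite T" if "dominating V E T" for T
    using finite_subset[OF dominating_subset[OF that] assms] .
  define A where "A = (SIGMA T:D i. V - T)"
  define B where "B = (SIGMA S:D (Suc i). removable V E S)"
  have "card A = (\<Sum>T\<in>D i. card (V - T))"
    unfolding A_def using finite_D assms by (intro card_SigmaI) auto
  also have "\<dots> = (\<Sum>T\<in>D i. card V - i)"
  proof (rule sum.cong)
    fix T assume "T \<in> D i"
    then have "dominating V E T" "card T = i" unfolding D_def by auto
    then show "card (V - T) = card V - i"
      using card_Diff_subset[OF finite_dom dominating_subset] by simp
  qed simp
  finally have card_A: "card A = (card V - i) * dom_coeff V E i"
    by (simp add: D_def dom_coeff_def)
  have card_B: "card B = (\<Sum>S\<in>D (Suc i). card (removable V E S))"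
  proof (unfold B_def, rule card_SigmaI[OF finite_D], rule ballI)
    fix S assume "S \<in> D (Suc i)"
    then show "finite (removable V E S)"
      using finite_dom unfolding D_def removable_def by simp
  qed
  have "bij_betw (\<lambda>(T, v). (insert v T, v)) A B"
  proof (rule bij_betw_byWitness[where f' = "\<lambda>(S, v). (S - {v}, v)"])
    show "\<forall>x\<in>A. (\<lambda>(S, v). (S - {v}, v)) ((\<lambda>(T, v). (insert v T, v)) x) = x"
      unfolding A_def by auto
    show "\<forall>x\<in>B. (\<lambda>(T, v). (insert v T, v)) ((\<lambda>(S, v). (S - {v}, v)) x) = x"
      unfolding B_def removable_def by auto
    show "(\<lambda>(T, v). (insert v T, v)) ` A \<subseteq> B"
    proof clarify
      fix T v assume "(T, v) \<in> A"
      then have T: "dominating V E T" "card T = i" and "v \<in> V" "v \<notin> T"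
        unfolding A_def D_def by auto
      then have "dominating V E (insert v T)"
        unfolding dominating_def by blast
      then show "(insert v T, v) \<in> B"
        using T finite_dom[OF T(1)] \<open>v \<notin> T\<close> unfolding B_def D_def removable_def by simp
    qed
    show "(\<lambda>(S, v). (S - {v}, v)) ` B \<subseteq> A"
    proof clarify
      fix S v assume "(S, v) \<in> B"
      then have S: "dominating V E S" "card S = Suc i" and "v \<in> S" "dominating V E (S - {v})"
        unfolding B_def D_def removable_def by auto
      then show "(S - {v}, v) \<in> A"
        using finite_dom[OF S(1)] dominating_subset[OF S(1)] unfolding A_def D_def by auto
    qed
  qed
  then have "card A = card B" by (rule bij_betw_same_card)
  then show ?thesis using card_A card_B by (simp add: D_def)
qed

lemma dom_coeff_le_dom_coeff_Suc:
  assumes "finite V" "i < card V"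
    and "\<And>S. dominating V E S \<Longrightarrow> card S = Suc i \<Longrightarrow> card (removable V E S) \<le> card V - i"
  shows "dom_coeff V E i \<le> dom_coeff V E (Suc i)"
proof -
  let ?D = "{S. dominating V E S \<and> card S = Suc i}"
  have "(card V - i) * dom_coeff V E i = (\<Sum>S\<in>?D. card (removable V E S))"
    using assms(1) by (rule dom_coeff_double_count)
  also have "\<dots> \<le> card ?D * (card V - i)"
    using sum_bounded_above[of ?D "\<lambda>S. card (removable V E S)" "card V - i"] assms(3) by auto
  finally show ?thesis using assms(2) by (simp add: dom_coeff_def)
qed

lemma dom_coeff_Suc_le_dom_coeff:
  assumes "finite V" "i < card V"
    and "\<And>S. dominating V E S \<Longrightarrow> card S = Suc i \<Longrightarrow> card V - i \<le> card (removable V E S)"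
  shows "dom_coeff V E (Suc i) \<le> dom_coeff V E i"
proof -
  let ?D = "{S. dominating V E S \<and> card S = Suc i}"
  have "card ?D * (card V - i) \<le> (\<Sum>S\<in>?D. card (removable V E S))"
    using sum_bounded_below[of ?D "card V - i" "\<lambda>S. card (removable V E S)"] assms(3) by auto
  also have "\<dots> = (card V - i) * dom_coeff V E i"
    using assms(1) by (rule dom_coeff_double_count[symmetric])
  finally show ?thesis using assms(2) by (simp add: dom_coeff_def)
qed

lemma unimodalI:
  assumes rising: "\<And>i. i < n \<Longrightarrow> i < m \<Longrightarrow> a i \<le> a (Suc i)"
    and falling: "\<And>i. i < n \<Longrightarrow> m < i \<Longrightarrow> a (Suc i) \<le> a i"
  shows "unimodal a n"
proof (cases "m < n \<and> a m \<le> a (Suc m)")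
  case True
  have "\<forall>i. i < Suc m \<longrightarrow> a i \<le> a (Suc i)"
    using True rising by (auto simp: less_Suc_eq)
  moreover have "\<forall>i. Suc m \<le> i \<and> i < n \<longrightarrow> a (Suc i) \<le> a i"
    using falling by simp
  ultimately show ?thesis
    unfolding unimodal_def using True by (intro exI[of _ "Suc m"]) simp
next
  case False
  have "\<forall>i. i < min m n \<longrightarrow> a i \<le> a (Suc i)"
    using rising by simp
  moreover have "a (Suc i) \<le> a i" if "min m n \<le> i" "i < n" for i
  proof (cases "i = m")
    case True
    then show ?thesis using False \<open>i < n\<close> by simp
  next
    case False
    then show ?thesis using falling that by simp
  qed
  ultimately show ?thesis
    unfolding unimodal_def by (intro exI[of _ "min m n"]) auto
qed

locale tree =
  fixes V :: "'a set" and E :: "'a set set"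
  assumes is_tree: "is_tree V E"
begin

lemma finite_V: "finite V"
  using is_tree by (simp add: is_tree_def simple_graph_def)

lemma adj_in_V: "adj E u v \<Longrightarrow> u \<in> V \<and> v \<in> V"
  using is_tree unfolding is_tree_def simple_graph_def adj_def by blast

lemma not_adj_self: "\<not> adj E v v"
  using is_tree unfolding is_tree_def simple_graph_def adj_def by fastforce

definition root :: 'a where
  "root = (SOME r. r \<in> V)"

lemma root_in_V: "root \<in> V"
  using is_tree unfolding is_tree_def connected_graph_def root_def by (simp add: some_in_eq)

definition depth :: "'a \<Rightarrow> nat" where
  "depth v = (LEAST k. \<exists>p. walk V E p \<and> hd p = root \<and> last p = v \<and> length p = Suc k)"

lemma shortest_walk:
  assumes "v \<in> V"
  obtains p where "walk V E p" "hd p = root" "last p = v" "length p = Suc (depth v)"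
proof -
  obtain p where p: "walk V E p" "hd p = root" "last p = v"
    using is_tree assms root_in_V unfolding is_tree_def connected_graph_def by blast
  then have "length p = Suc (length p - 1)" by (simp add: walk_def)
  with p have "\<exists>k p. walk V E p \<and> hd p = root \<and> last p = v \<and> length p = Suc k" by blast
  then have "\<exists>p. walk V E p \<and> hd p = root \<and> last p = v \<and> length p = Suc (depth v)"
    unfolding depth_def by (rule LeastI_ex)
  then show ?thesis using that by blast
qed

lemma depth_less_length:
  assumes "walk V E p" "hd p = root" "last p = v"
  shows "depth v < length p"
proof -
  have "length p = Suc (length p - 1)" using assms by (simp add: walk_def)
  then have "depth v \<le> length p - 1"
    unfolding depth_def using assms by (intro Least_le) blast
  then show ?thesis using \<open>length p = Suc (length p - 1)\<close> by linarith
qed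

lemma depth_adj_le:
  assumes "adj E u v"
  shows "depth v \<le> Suc (depth u)"
proof -
  obtain p where p: "walk V E p" "hd p = root" "last p = u" "length p = Suc (depth u)"
    using shortest_walk adj_in_V[OF assms] by blast
  have "walk V E (p @ [v])"
    using p assms adj_in_V[OF assms] by (auto simp: walk_iff_successively successively_append_iff)
  moreover have "hd (p @ [v]) = root" using p by (simp add: walk_def)
  ultimately have "depth v < length (p @ [v])" by (rule depth_less_length) simp
  then show ?thesis using p by simp
qed

lemma depth_eq_0_imp_root:
  assumes "v \<in> V" "depth v = 0"
  shows "v = root"
proof -
  obtain p where "walk V E p" "hd p = root" "last p = v" "length p = Suc 0"
    using shortest_walk assms by metis
  then show ?thesis by (cases p) auto
qed

lemma lower_neighbour_exists:
  assumes "v \<in> V" "0 < depth v"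
  shows "\<exists>u. adj E u v \<and> Suc (depth u) = depth v"
proof -
  obtain p where p: "walk V E p" "hd p = root" "last p = v" "length p = Suc (depth v)"
    using shortest_walk assms(1) by blast
  define q where "q = butlast p"
  have "p = q @ [v]" "length q = depth v"
    using p unfolding q_def walk_def by auto
  then have "q \<noteq> []" using assms(2) by auto
  moreover have "walk V E (q @ [v])" "hd (q @ [v]) = root"
    using p \<open>p = q @ [v]\<close> by simp_all
  ultimately have "walk V E q" "hd q = root" "adj E (last q) v"
    by (auto simp: walk_iff_successively successively_append_iff)
  then have "depth (last q) < length q" by (intro depth_less_length) auto
  then have "Suc (depth (last q)) = depth v"
    using depth_adj_le[OF \<open>adj E (last q) v\<close>] \<open>length q = depth v\<close> by linarith
  then show ?thesis using \<open>adj E (last q) v\<close> by blast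
qed

definition parent :: "'a \<Rightarrow> 'a" where
  "parent v = (SOME u. adj E u v \<and> Suc (depth u) = depth v)"

lemma
  assumes "v \<in> V" "0 < depth v"
  shows adj_parent: "adj E (parent v) v"
    and depth_parent: "Suc (depth (parent v)) = depth v"
  using someI_ex[OF lower_neighbour_exists[OF assms]] unfolding parent_def by auto

lemma same_depth_path:
  assumes "x \<in> V" "y \<in> V" "x \<noteq> y" "depth x = depth y"
  shows "\<exists>p. walk V E p \<and> distinct p \<and> hd p = x \<and> last p = y \<and> 3 \<le> length p \<and>
    (\<forall>z\<in>set p. depth z \<le> depth x)"
  using assms
proof (induction "depth x" arbitrary: x y)
  case 0
  then show ?case using depth_eq_0_imp_root by metis
next
  case (Suc d)
  let ?px = "parent x" and ?py = "parent y"
  have x: "adj E x ?px" "depth ?px = d"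
    using Suc.hyps Suc.prems adj_parent[of x] depth_parent[of x] by (auto simp: adj_commute)
  have y: "adj E ?py y" "depth ?py = d"
    using Suc.hyps Suc.prems adj_parent[of y] depth_parent[of y] by auto
  show ?case
  proof (cases "?px = ?py")
    case True
    have "walk V E [x, ?px, y]"
      using x y True adj_in_V[of x ?px] Suc.prems by (simp add: walk_iff_successively)
    moreover have "distinct [x, ?px, y]"
      using x y Suc.hyps Suc.prems by auto
    ultimately show ?thesis
      using x Suc.hyps(2) Suc.prems(4) by (intro exI[of _ "[x, ?px, y]"]) auto
  next
    case False
    obtain q where q: "walk V E q" "distinct q" "hd q = ?px" "last q = ?py"
      "\<forall>z\<in>set q. depth z \<le> d"
      using Suc.hyps(1)[of ?px ?py] False x y adj_in_V by (metis adj_commute)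
    have "x \<notin> set q" "y \<notin> set q"
      using q(5) Suc.hyps(2) Suc.prems(4) by fastforce+
    moreover have "q \<noteq> []" using q(1) by (simp add: walk_def)
    moreover have "walk V E (x # q @ [y])"
      using q x y Suc.prems \<open>q \<noteq> []\<close>
      by (auto simp: walk_iff_successively successively_append_iff successively_Cons)
    ultimately show ?thesis
      using q Suc.hyps(2) Suc.prems by (intro exI[of _ "x # q @ [y]"]) (auto simp: Suc_le_eq)
  qed
qed

lemma depth_adj:
  assumes "adj E u v"
  shows "depth v = Suc (depth u) \<or> depth u = Suc (depth v)"
proof -
  have "depth u \<noteq> depth v"
  proof
    assume "depth u = depth v"
    then obtain p where "walk V E p" "distinct p" "hd p = u" "last p = v" "3 \<le> length p"
      using same_depth_path adj_in_V[OF assms] not_adj_self assms by metis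
    then have "has_cycle V E"
      unfolding has_cycle_def using assms adj_commute by metis
    then show False using is_tree by (simp add: is_tree_def)
  qed
  then show ?thesis
    using depth_adj_le[OF assms] depth_adj_le[of v u] assms adj_commute by fastforce
qed

lemma lower_neighbour_eq_parent:
  assumes "adj E u v" "Suc (depth u) = depth v"
  shows "u = parent v"
proof (rule ccontr)
  assume "u \<noteq> parent v"
  have "v \<in> V" "0 < depth v" using adj_in_V[OF assms(1)] assms(2) by auto
  note parent = adj_parent[OF this] depth_parent[OF this]
  obtain p where p: "walk V E p" "distinct p" "hd p = u" "last p = parent v" "3 \<le> length p"
    "\<forall>z\<in>set p. depth z \<le> depth u"
    using same_depth_path[of u "parent v"] \<open>u \<noteq> parent v\<close> adj_in_V assms parent by fastforce
  have "v \<notin> set p" using p(6) assms(2) by fastforce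
  moreover have "adj E v u" using assms(1) by (simp add: adj_commute)
  ultimately have "walk V E (p @ [v])" "distinct (p @ [v])" "adj E (last (p @ [v])) (hd (p @ [v]))"
    using p parent(1) \<open>v \<in> V\<close> by (auto simp: walk_iff_successively successively_append_iff)
  then have "has_cycle V E"
    unfolding has_cycle_def using p(5) by (intro exI[of _ "p @ [v]"]) simp
  then show False using is_tree by (simp add: is_tree_def)
qed

lemma even_depth_adj: "adj E u v \<Longrightarrow> even (depth u) \<noteq> even (depth v)"
  using depth_adj by fastforce

lemma removable_partner:
  assumes "dominating V E S" "v \<in> removable V E S" "w \<in> removable V E S" "w \<noteq> v"
    and "\<not> dominating V E (S - {v} - {w})" "depth w \<le> depth v"
  shows "w = parent v \<or>
    (parent v \<notin> S \<and> adj E w (parent v) \<and> (\<forall>z\<in>S - {v} - {w}. \<not> adj E z (parent v)))"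
proof -
  have "S - {v} - {w} \<subseteq> V" using dominating_subset[OF assms(1)] by blast
  then obtain u where u: "u \<in> V" "u \<notin> S - {v} - {w}" "\<forall>z\<in>S - {v} - {w}. \<not> adj E z u"
    using assms(5) unfolding dominating_def by blast
  have "dominating V E (S - {v})" "dominating V E (S - {w})"
    using assms(2,3) unfolding removable_def by auto
  then have "u = w \<or> adj E w u" "u = v \<or> adj E v u"
    using u unfolding dominating_def by blast+
  show ?thesis
  proof (cases "u = v \<or> u = w")
    case True
    then have "adj E w v"
      using \<open>u = w \<or> adj E w u\<close> \<open>u = v \<or> adj E v u\<close> assms(4) by (auto simp: adj_commute)
    then have "Suc (depth w) = depth v" using depth_adj assms(6) by fastforce
    then show ?thesis using lower_neighbour_eq_parent[OF \<open>adj E w v\<close>] by blast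
  next
    case False
    then have "adj E v u" "adj E w u" "u \<notin> S"
      using \<open>u = w \<or> adj E w u\<close> \<open>u = v \<or> adj E v u\<close> u(2) by auto
    have "depth u \<noteq> Suc (depth v)"
    proof
      assume "depth u = Suc (depth v)"
      then have "Suc (depth w) = depth u"
        using depth_adj[OF \<open>adj E w u\<close>] assms(6) by linarith
      then have "w = v"
        using lower_neighbour_eq_parent \<open>adj E v u\<close> \<open>adj E w u\<close> \<open>depth u = Suc (depth v)\<close>
        by metis
      then show False using assms(4) by simp
    qed
    then have "u = parent v"
      using depth_adj[OF \<open>adj E v u\<close>] \<open>adj E v u\<close>
      by (metis adj_commute lower_neighbour_eq_parent)
    then show ?thesis using u(3) \<open>adj E w u\<close> \<open>u \<notin> S\<close> by blast
  qed
qed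

lemma card_removable_le_remove_deepest:
  assumes "dominating V E S" "v \<in> removable V E S"
    and deepest: "\<And>w. w \<in> removable V E S \<Longrightarrow> depth w \<le> depth v"
  shows "card (removable V E S) \<le> card (removable V E (S - {v})) + 2"
proof -
  define Q where "Q = {w \<in> removable V E S - {v}. \<not> dominating V E (S - {v} - {w})}"
  have "finite S" using finite_subset[OF dominating_subset[OF assms(1)] finite_V] .
  then have "finite (removable V E (S - {v}))" "finite Q"
    unfolding Q_def removable_def by auto
  have "a = b" if "a \<in> Q" "b \<in> Q" for a b
  proof (rule ccontr)
    assume "a \<noteq> b"
    then have "a \<in> S - {v} - {b}" "b \<in> S - {v} - {a}"
      using that unfolding Q_def removable_def by auto
    moreover have partner: "w = parent v \<or>
      (parent v \<notin> S \<and> adj E w (parent v) \<and> (\<forall>z\<in>S - {v} - {w}. \<not> adj E z (parent v)))"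
      if "w \<in> Q" for w
    proof -
      have w: "w \<in> removable V E S" "w \<noteq> v" "\<not> dominating V E (S - {v} - {w})"
        using that unfolding Q_def by auto
      show ?thesis using removable_partner[OF assms(1,2) w deepest[OF w(1)]] .
    qed
    ultimately show False using partner[OF \<open>a \<in> Q\<close>] partner[OF \<open>b \<in> Q\<close>] \<open>a \<noteq> b\<close> by blast
  qed
  then have "card Q \<le> 1" using \<open>finite Q\<close> by (simp add: card_le_Suc0_iff_eq)
  have "removable V E S \<subseteq> insert v (removable V E (S - {v}) \<union> Q)"
    unfolding Q_def removable_def by blast
  then have "card (removable V E S) \<le> card (insert v (removable V E (S - {v}) \<union> Q))"
    using \<open>finite Q\<close> \<open>finite (removable V E (S - {v}))\<close> by (intro card_mono) auto
  also have "\<dots> \<le> Suc (card (removable V E (S - {v}) \<union> Q))"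
    using \<open>finite Q\<close> \<open>finite (removable V E (S - {v}))\<close> by (simp add: card_insert_if)
  also have "\<dots> \<le> Suc (card (removable V E (S - {v})) + card Q)"
    using card_Un_le by simp
  finally show ?thesis using \<open>card Q \<le> 1\<close> by linarith
qed

lemma card_removable_plus_domination_number_le:
  "dominating V E S \<Longrightarrow> card (removable V E S) + 2 * domination_number V E \<le> 2 * card S"
proof (induction "card S" arbitrary: S rule: less_induct)
  case less
  show ?case
  proof (cases "removable V E S = {}")
    case True
    then show ?thesis using domination_number_le[OF finite_V less.prems] by simp
  next
    case False
    have "finite S" using finite_subset[OF dominating_subset[OF less.prems] finite_V] .
    then have "finite (removable V E S)" unfolding removable_def by simp
    then have "Max (depth ` removable V E S) \<in> depth ` removable V E S"
      using False by (intro Max_in) auto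
    then obtain v where v: "Max (depth ` removable V E S) = depth v" "v \<in> removable V E S"
      by (rule imageE)
    then have "depth w \<le> depth v" if "w \<in> removable V E S" for w
      using that \<open>finite (removable V E S)\<close> v(1)[symmetric] by simp
    then have "card (removable V E S) \<le> card (removable V E (S - {v})) + 2"
      by (rule card_removable_le_remove_deepest[OF less.prems v(2)])
    moreover have "v \<in> S" "dominating V E (S - {v})"
      using v(2) unfolding removable_def by auto
    moreover have "card (S - {v}) = card S - 1" "card (S - {v}) < card S"
      using \<open>finite S\<close> \<open>v \<in> S\<close> by (simp, rule card_Diff1_less)
    ultimately show ?thesis
      using less.hyps[of "S - {v}"] by linarith
  qed
qed

lemma dom_coeff_rising:
  assumes "i < card V" "3 * i + 2 \<le> card V + 2 * domination_number V E"
  shows "dom_coeff V E i \<le> dom_coeff V E (Suc i)"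
proof (rule dom_coeff_le_dom_coeff_Suc[OF finite_V \<open>i < card V\<close>])
  fix S assume "dominating V E S" "card S = Suc i"
  then show "card (removable V E S) \<le> card V - i"
    using card_removable_plus_domination_number_le[OF \<open>dominating V E S\<close>] assms(2) by linarith
qed

lemma dom_coeff_falling:
  assumes "i < card V" "card V + 2 * upper_domination_number V E \<le> 3 * i + 2"
  shows "dom_coeff V E (Suc i) \<le> dom_coeff V E i"
proof (rule dom_coeff_Suc_le_dom_coeff[OF finite_V \<open>i < card V\<close>])
  fix S assume "dominating V E S" "card S = Suc i"
  then show "card V - i \<le> card (removable V E S)"
    using twice_card_le_card_removable_plus_upper_domination_number[where c = "\<lambda>v. even (depth v)",
        OF finite_V even_depth_adj \<open>dominating V E S\<close>] assms(2)
    by linarith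
qed

end

theorem corollary4p12:
  fixes V :: "'a set" and E :: "'a set set"
  assumes "is_tree V E"
    and "upper_domination_number V E - domination_number V E < 3"
  shows "unimodal (dom_coeff V E) (card V)"
proof -
  interpret tree V E by (rule tree.intro) (rule assms(1))
  define m where "m = (card V + 2 * domination_number V E + 1) div 3"
  have m: "3 * m \<le> card V + 2 * domination_number V E + 1"
    "card V + 2 * domination_number V E + 1 < 3 * m + 3"
    unfolding m_def using div_mult_mod_eq[of "card V + 2 * domination_number V E + 1" 3] by linarith+
  show ?thesis
  proof (rule unimodalI[where m = m])
    fix i assume "i < card V" "i < m"
    then show "dom_coeff V E i \<le> dom_coeff V E (Suc i)"
      using m by (intro dom_coeff_rising) linarith+
  next
    fix i assume "i < card V" "m < i"
    then show "dom_coeff V E (Suc i) \<le> dom_coeff V E i"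
      using m assms(2) by (intro dom_coeff_falling) linarith+
  qed
qed

end
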